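(* Let $p>1$, $N\in\mathbb{N}$, and let $\mu_1,\mu_2$ be permutation invariant Radon probability measures on $\mathbb{R}^N$ whose $p_0$:th moments are finite for some $p_0\ge p$. Let $J=(J_1,\dots,J_{n_J})$ be a finite sequence of elements of $[N]$ (repetitions allowed), of length $n_J$, and let $I=\{J_\ell:\ell\in[n_J]\}\subset[N]$. For $x\in\mathbb{R}^N$ put $x^J=\prod_{\ell=1}^{n_J}x_{J_\ell}$. Assume $n_J\le p_0+1-\frac{p_0}{p}$. Then \[ \left|\langle x^J\rangle_{\mu_1}-\langle x^J\rangle_{\mu_2}\right|\le n_J\,M(J,p)^{n_J-1}\left(\frac{|I|}{1-\frac{|I|}{N}}\right)^{1/p}w_p(\mu_1,\mu_2;N), \] where $M(J,p)=1$ if $n_J=1$, and otherwise, with $q=\frac{p}{p-1}$, \[ M(J,p)=\max_{i\in I}\left(\langle|x_i|^{q(n_J-1)}\rangle_{\mu_1}^{\frac{1}{q(n_J-1)}},\ \langle|x_i|^{q(n_J-1)}\rangle_{\mu_2}^{\frac{1}{q(n_J-1)}}\right)<\infty. \]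
   Context: $[N]=\{1,\dots,N\}$. A probability measure $\mu$ on $\mathbb{R}^N$ is permutation invariant if for every integrable $f$ and every permutation $\pi$ of $[N]$, $f\circ Q_\pi$ is integrable and $\langle f\circ Q_\pi\rangle_\mu=\langle f\rangle_\mu$, where $(Q_\pi x)_j=x_{\pi^{-1}(j)}$. The specific $p$-norm fluctuation distance is $w_p(\mu_1,\mu_2;N)=\left(\inf_\gamma\int\gamma(dx,dy)\frac1N\sum_{i=1}^N|x_i-y_i|^p\right)^{1/p}$, the infimum over all couplings $\gamma$ of $\mu_1$ and $\mu_2$. *)

theory Defs
  imports "HOL-Probability.Probability"
begin

text \<open>Points of R^N are vectors real^'n with N = CARD('n); the index set [N] is UNIV :: 'n set.\<close>

definition Qperm :: "('n \<Rightarrow> 'n) \<Rightarrow> real^'n \<Rightarrow> real^'n" where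
  "Qperm \<pi> x = (\<chi> j. x $ (inv \<pi> j))"

definition perm_invariant :: "(real^'n::finite) measure \<Rightarrow> bool" where
  "perm_invariant \<mu> \<longleftrightarrow>
     (\<forall>\<pi> f. \<pi> permutes (UNIV :: 'n set) \<longrightarrow> integrable \<mu> (f :: real^'n \<Rightarrow> real) \<longrightarrow>
        integrable \<mu> (f \<circ> Qperm \<pi>) \<and> integral\<^sup>L \<mu> (f \<circ> Qperm \<pi>) = integral\<^sup>L \<mu> f)"

text \<open>Borel probability measure on R^N (every such measure is Radon).\<close>
definition borel_prob :: "(real^'n::finite) measure \<Rightarrow> bool" where
  "borel_prob \<mu> \<longleftrightarrow> prob_space \<mu> \<and> sets \<mu> = sets borel"

definition coupling ::
  "((real^'n::finite) \<times> (real^'n)) measure \<Rightarrow> (real^'n) measure \<Rightarrow> (real^'n) measure \<Rightarrow> bool" where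
  "coupling \<gamma> \<mu>1 \<mu>2 \<longleftrightarrow> sets \<gamma> = sets (borel \<Otimes>\<^sub>M borel)
     \<and> distr \<gamma> borel fst = \<mu>1 \<and> distr \<gamma> borel snd = \<mu>2"

definition wp_cost :: "real \<Rightarrow> (real^'n::finite) measure \<Rightarrow> (real^'n) measure \<Rightarrow> ennreal" where
  "wp_cost p \<mu>1 \<mu>2 = (INF \<gamma> \<in> {\<gamma>. coupling \<gamma> \<mu>1 \<mu>2}.
      \<integral>\<^sup>+ z. ennreal ((1 / real CARD('n)) * (\<Sum>i\<in>UNIV. \<bar>fst z $ i - snd z $ i\<bar> powr p)) \<partial>\<gamma>)"

text \<open>w_p(mu1,mu2;N); meaningful when the cost is finite (which holds under finite p-th moments).\<close>
definition wp_dist :: "real \<Rightarrow> (real^'n::finite) measure \<Rightarrow> (real^'n) measure \<Rightarrow> real" where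
  "wp_dist p \<mu>1 \<mu>2 = (enn2real (wp_cost p \<mu>1 \<mu>2)) powr (1 / p)"

definition monomial :: "'n list \<Rightarrow> real^'n \<Rightarrow> real" where
  "monomial J x = (\<Prod>l<length J. x $ (J ! l))"

definition coord_norm :: "(real^'n::finite) measure \<Rightarrow> real \<Rightarrow> 'n \<Rightarrow> real" where
  "coord_norm \<mu> r i = (\<integral>x. \<bar>x $ i\<bar> powr r \<partial>\<mu>) powr (1 / r)"

definition Mconst :: "(real^'n::finite) measure \<Rightarrow> (real^'n) measure \<Rightarrow> 'n list \<Rightarrow> real \<Rightarrow> real" where
  "Mconst \<mu>1 \<mu>2 J p =
     (if length J = 1 then 1
      else (let q = p / (p - 1); r = q * (real (length J) - 1) in
            Max ((\<lambda>i. max (coord_norm \<mu>1 r i) (coord_norm \<mu>2 r i)) ` set J)))"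

end

theory Submission
  imports Defs
begin

text \<open>
  Telescoping writes x^J - y^J as a sum of n_J terms (x_{J_l} - y_{J_l}) times a product of
  n_J - 1 coordinates of x or y. Integrated against a coupling, each term is bounded by
  Hoelder's inequality with exponents p and q, and by the arithmetic-geometric mean inequality
  the L^q norm of the product is at most M^(n_J - 1). Permutation invariance allows replacing J
  by \<sigma> \<circ> J; averaging over all permutations \<sigma> turns the sum of the L^p distances of the
  coordinates J_l into n_J times their mean over all N coordinates, which by the power-mean
  inequality is at most the p-th root of the transport cost. Taking the infimum over couplings
  gives the bound with constant n_J M^(n_J - 1), which is stronger than the stated one: the
  factor (|I| / (1 - |I| / N))^(1/p) is at least 1.
\<close>

lemma powr_le_one_plus_powr:
  fixes a s t :: real
  assumes "0 \<le> a" "0 \<le> s" "s \<le> t"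
  shows "a powr s \<le> 1 + a powr t"
proof (cases "a \<le> 1")
  case True
  then have "a powr s \<le> 1"
    using assms by (cases "a = 0") (auto intro: powr_le1)
  then show ?thesis by (smt (verit) powr_ge_zero)
next
  case False
  then have "a powr s \<le> a powr t" using assms by (intro powr_mono) auto
  then show ?thesis by simp
qed

lemma abs_diff_powr_le:
  fixes a b p :: real
  assumes "0 \<le> p"
  shows "\<bar>a - b\<bar> powr p \<le> 2 powr p * (\<bar>a\<bar> powr p + \<bar>b\<bar> powr p)"
proof -
  have "\<bar>a - b\<bar> powr p \<le> (2 * max \<bar>a\<bar> \<bar>b\<bar>) powr p"
    using assms by (intro powr_mono2) auto
  also have "\<dots> = 2 powr p * max \<bar>a\<bar> \<bar>b\<bar> powr p" by (simp add: powr_mult)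
  also have "max \<bar>a\<bar> \<bar>b\<bar> powr p \<le> \<bar>a\<bar> powr p + \<bar>b\<bar> powr p"
    by (simp add: max_def)
  finally show ?thesis by (simp add: mult_left_mono)
qed

lemma prod_lessThan_diff_telescope:
  fixes a b :: "nat \<Rightarrow> 'a::comm_ring_1"
  shows "(\<Prod>l<n. a l) - (\<Prod>l<n. b l)
    = (\<Sum>l<n. (a l - b l) * (\<Prod>k\<in>{..<n} - {l}. if k < l then a k else b k))"
proof (induction n)
  case 0
  then show ?case by simp
next
  case (Suc n)
  define c where "c l k = (if k < l then a k else b k)" for l k
  have "(\<Prod>k\<in>{..<Suc n} - {l}. c l k) = b n * (\<Prod>k\<in>{..<n} - {l}. c l k)" if "l < n" for l
  proof -
    have "{..<Suc n} - {l} = insert n ({..<n} - {l})" using that by auto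
    then show ?thesis using that by (simp add: c_def)
  qed
  moreover have "(\<Prod>k\<in>{..<Suc n} - {n}. c n k) = (\<Prod>k<n. a k)"
    by (intro prod.cong) (auto simp: c_def)
  ultimately show ?case
    using Suc unfolding c_def[symmetric] by (simp add: sum_distrib_left algebra_simps)
qed

section \<open>Lebesgue norms and Hoelder's inequality\<close>

definition Lnorm :: "'a measure \<Rightarrow> real \<Rightarrow> ('a \<Rightarrow> real) \<Rightarrow> real" where
  "Lnorm M r f = (\<integral>x. \<bar>f x\<bar> powr r \<partial>M) powr (1 / r)"

lemma Lnorm_nonneg: "0 \<le> Lnorm M r f"
  by (simp add: Lnorm_def)

lemma Lnorm_powr: "0 < r \<Longrightarrow> Lnorm M r f powr r = (\<integral>x. \<bar>f x\<bar> powr r \<partial>M)"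
  by (simp add: Lnorm_def powr_powr)

lemma Lnorm_le_iff:
  assumes "0 < r" "0 \<le> \<beta>"
  shows "Lnorm M r f \<le> \<beta> \<longleftrightarrow> (\<integral>x. \<bar>f x\<bar> powr r \<partial>M) \<le> \<beta> powr r"
proof
  assume "Lnorm M r f \<le> \<beta>"
  then have "Lnorm M r f powr r \<le> \<beta> powr r"
    using assms by (intro powr_mono2) (auto simp: Lnorm_nonneg)
  then show "(\<integral>x. \<bar>f x\<bar> powr r \<partial>M) \<le> \<beta> powr r" using assms by (simp add: Lnorm_powr)
next
  assume "(\<integral>x. \<bar>f x\<bar> powr r \<partial>M) \<le> \<beta> powr r"
  then have "Lnorm M r f \<le> (\<beta> powr r) powr (1 / r)"
    unfolding Lnorm_def using assms by (intro powr_mono2) auto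
  then show "Lnorm M r f \<le> \<beta>" using assms by (simp add: powr_powr)
qed

lemma conjugate_exponent_gt_1:
  fixes p q :: real
  assumes "1 < p" "1 / p + 1 / q = 1"
  shows "1 < q"
  using assms by (metis add_strict_mono divide_less_eq_1_pos less_add_one less_add_same_cancel1
      less_add_same_cancel2 zero_less_divide_1_iff)

lemma Holder_inequality:
  fixes f g :: "'a \<Rightarrow> real"
  assumes pq: "1 < p" "1 / p + 1 / q = 1"
    and [measurable]: "f \<in> borel_measurable M" "g \<in> borel_measurable M"
    and f: "integrable M (\<lambda>x. \<bar>f x\<bar> powr p)" and g: "integrable M (\<lambda>x. \<bar>g x\<bar> powr q)"
  shows "integrable M (\<lambda>x. f x * g x)"
    and "(\<integral>x. \<bar>f x * g x\<bar> \<partial>M) \<le> Lnorm M p f * Lnorm M q g"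
proof -
  have q: "1 < q" using conjugate_exponent_gt_1[OF pq] .
  have Young: "\<bar>f x * g x\<bar> \<le> \<bar>f x\<bar> powr p / p + \<bar>g x\<bar> powr q / q" for x
    using Youngs_inequality[OF pq(1) q pq(2), of "\<bar>f x\<bar>" "\<bar>g x\<bar>"] by (simp add: abs_mult)
  show fg: "integrable M (\<lambda>x. f x * g x)"
    by (rule Bochner_Integration.integrable_bound[where f="\<lambda>x. \<bar>f x\<bar> powr p / p + \<bar>g x\<bar> powr q / q"])
       (use f g in \<open>auto intro!: AE_I2 order_trans[OF Young abs_ge_self]\<close>)
  define A where "A = Lnorm M p f"
  define B where "B = Lnorm M q g"
  have A: "A powr p = (\<integral>x. \<bar>f x\<bar> powr p \<partial>M)" and B: "B powr q = (\<integral>x. \<bar>g x\<bar> powr q \<partial>M)"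
    using pq q by (simp_all add: A_def B_def Lnorm_powr)
  show "(\<integral>x. \<bar>f x * g x\<bar> \<partial>M) \<le> A * B"
  proof (cases "A = 0 \<or> B = 0")
    case True
    then have "AE x in M. \<bar>f x\<bar> powr p = 0 \<or> \<bar>g x\<bar> powr q = 0"
      using A B f g pq q by (auto simp: integral_nonneg_eq_0_iff_AE)
    then have "AE x in M. \<bar>f x * g x\<bar> = 0" by eventually_elim auto
    then have "(\<integral>x. \<bar>f x * g x\<bar> \<partial>M) = 0" by (simp add: integral_eq_zero_AE)
    then show ?thesis by (simp add: A_def B_def Lnorm_nonneg)
  next
    case False
    then have AB: "0 < A" "0 < B" using Lnorm_nonneg by (auto simp: A_def B_def order_le_less)
    have "\<bar>f x * g x\<bar> / (A * B) \<le> \<bar>f x\<bar> powr p / (p * A powr p) + \<bar>g x\<bar> powr q / (q * B powr q)" for x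
      using Youngs_inequality[OF pq(1) q pq(2), of "\<bar>f x\<bar> / A" "\<bar>g x\<bar> / B"] AB
      by (simp add: abs_mult powr_divide mult.commute)
    then have "(\<integral>x. \<bar>f x * g x\<bar> / (A * B) \<partial>M)
        \<le> (\<integral>x. \<bar>f x\<bar> powr p / (p * A powr p) + \<bar>g x\<bar> powr q / (q * B powr q) \<partial>M)"
      using f g fg by (intro integral_mono) auto
    also have "\<dots> = A powr p / (p * A powr p) + B powr q / (q * B powr q)"
      using f g by (simp add: A B)
    also have "\<dots> = 1 / p + 1 / q"
      using AB by simp
    finally show ?thesis using AB pq by (simp add: divide_le_eq)
  qed
qed

lemma mean_le_power_mean:
  fixes a :: "'i \<Rightarrow> real"
  assumes S: "finite S" "S \<noteq> {}" and p: "1 < p" and a: "\<And>i. i \<in> S \<Longrightarrow> 0 \<le> a i"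
  shows "(\<Sum>i\<in>S. a i) / card S \<le> ((\<Sum>i\<in>S. a i powr p) / card S) powr (1 / p)"
proof -
  define q where "q = p / (p - 1)"
  have pq: "1 / p + 1 / q = 1" using p by (simp add: q_def field_simps)
  have N: "0 < real (card S)" using S by (simp add: card_gt_0_iff)
  have "(\<Sum>i\<in>S. a i) = (\<integral>i. \<bar>a i * 1\<bar> \<partial>count_space S)"
    using S a by (simp add: lebesgue_integral_count_space_finite)
  also have "\<dots> \<le> Lnorm (count_space S) p a * Lnorm (count_space S) q (\<lambda>_. 1)"
    using S by (intro Holder_inequality(2)[OF p pq]) (auto simp: integrable_count_space)
  also have "\<dots> = (\<Sum>i\<in>S. a i powr p) powr (1 / p) * card S powr (1 / q)"
    using S a by (simp add: Lnorm_def lebesgue_integral_count_space_finite)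
  also have "\<dots> = ((\<Sum>i\<in>S. a i powr p) / card S) powr (1 / p) * card S"
    using N a pq by (simp add: powr_divide sum_nonneg powr_add[symmetric] field_simps)
  finally show ?thesis
    using N by (simp add: divide_le_eq)
qed

lemma integrable_abs_diff_powr:
  fixes f g :: "'a \<Rightarrow> real"
  assumes [measurable]: "f \<in> borel_measurable M" "g \<in> borel_measurable M" and "0 \<le> p"
    and "integrable M (\<lambda>x. \<bar>f x\<bar> powr p)" "integrable M (\<lambda>x. \<bar>g x\<bar> powr p)"
  shows "integrable M (\<lambda>x. \<bar>f x - g x\<bar> powr p)"
  by (rule Bochner_Integration.integrable_bound[where f="\<lambda>x. 2 powr p * (\<bar>f x\<bar> powr p + \<bar>g x\<bar> powr p)"])
     (use assms abs_diff_powr_le in auto)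

lemma (in prob_space) integrable_abs_powr_mono:
  fixes f :: "'a \<Rightarrow> real"
  assumes [measurable]: "f \<in> borel_measurable M"
    and "integrable M (\<lambda>x. \<bar>f x\<bar> powr t)" "0 \<le> s" "s \<le> t"
  shows "integrable M (\<lambda>x. \<bar>f x\<bar> powr s)"
  by (rule Bochner_Integration.integrable_bound[where f="\<lambda>x. 1 + \<bar>f x\<bar> powr t"])
     (use assms powr_le_one_plus_powr in auto)

lemma abs_prod_powr_le_mean:
  fixes f :: "'i \<Rightarrow> real"
  assumes "finite S" "S \<noteq> {}"
  shows "\<bar>\<Prod>k\<in>S. f k\<bar> powr q \<le> (\<Sum>k\<in>S. \<bar>f k\<bar> powr (q * card S) / card S)"
proof -
  have "\<bar>\<Prod>k\<in>S. f k\<bar> powr q = (\<Prod>k\<in>S. \<bar>f k\<bar> powr (q * card S)) powr (1 / card S)"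
    using assms by (simp add: abs_prod prod_powr_distrib powr_powr)
  also have "\<dots> \<le> (\<Sum>k\<in>S. \<bar>f k\<bar> powr (q * card S) / card S)"
    using assms by (simp add: arith_geom_mean)
  finally show ?thesis .
qed

lemma (in prob_space) integrable_abs_prod_powr:
  fixes F :: "'i \<Rightarrow> 'a \<Rightarrow> real" and q :: real
  assumes "finite S"
    and [measurable]: "\<And>k. k \<in> S \<Longrightarrow> F k \<in> borel_measurable M"
    and "\<And>k. k \<in> S \<Longrightarrow> integrable M (\<lambda>x. \<bar>F k x\<bar> powr (q * card S))"
  shows "integrable M (\<lambda>x. \<bar>\<Prod>k\<in>S. F k x\<bar> powr q)"
proof (cases "S = {}")
  case False
  show ?thesis
    by (rule Bochner_Integration.integrable_bound[where f="\<lambda>x. \<Sum>k\<in>S. \<bar>F k x\<bar> powr (q * card S) / card S"])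
       (use assms False in \<open>auto intro!: AE_I2 order_trans[OF abs_prod_powr_le_mean abs_ge_self]\<close>)
qed simp

lemma (in prob_space) Lnorm_prod_le:
  fixes F :: "'i \<Rightarrow> 'a \<Rightarrow> real" and q \<beta> :: real
  assumes S: "finite S" and q: "0 < q" and \<beta>: "0 \<le> \<beta>"
    and [measurable]: "\<And>k. k \<in> S \<Longrightarrow> F k \<in> borel_measurable M"
    and int: "\<And>k. k \<in> S \<Longrightarrow> integrable M (\<lambda>x. \<bar>F k x\<bar> powr (q * card S))"
    and le: "\<And>k. k \<in> S \<Longrightarrow> Lnorm M (q * card S) (F k) \<le> \<beta>"
  shows "Lnorm M q (\<lambda>x. \<Prod>k\<in>S. F k x) \<le> \<beta> ^ card S"
proof (cases "S = {}")
  case True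
  then show ?thesis by (simp add: Lnorm_def prob_space)
next
  case False
  have m: "0 < card S" using S False by (simp add: card_gt_0_iff)
  have "(\<integral>x. \<bar>\<Prod>k\<in>S. F k x\<bar> powr q \<partial>M) \<le> (\<integral>x. (\<Sum>k\<in>S. \<bar>F k x\<bar> powr (q * card S) / card S) \<partial>M)"
    using S False int integrable_abs_prod_powr[OF S _ int]
    by (intro integral_mono abs_prod_powr_le_mean) auto
  also have "\<dots> = (\<Sum>k\<in>S. (\<integral>x. \<bar>F k x\<bar> powr (q * card S) \<partial>M) / card S)"
    using int by simp
  also have "\<dots> \<le> (\<Sum>k\<in>S. \<beta> powr (q * card S) / card S)"
    using int le q m \<beta> by (intro sum_mono divide_right_mono) (auto simp: Lnorm_le_iff)
  also have "\<dots> = \<beta> powr (q * card S)"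
    using m by simp
  also have "\<dots> = (\<beta> ^ card S) powr q"
    using m \<beta> q by (cases "\<beta> = 0") (simp_all add: powr_realpow[symmetric] powr_powr mult.commute)
  finally show ?thesis
    using q \<beta> by (simp add: Lnorm_le_iff)
qed

lemma (in prob_space) Lnorm_prod_mixed_le:
  fixes a b :: "nat \<Rightarrow> 'a \<Rightarrow> real" and q \<beta> :: real
  assumes l: "l < n" and q: "0 < q" and \<beta>: "0 \<le> \<beta>"
    and ab_meas: "\<And>k. a k \<in> borel_measurable M" "\<And>k. b k \<in> borel_measurable M"
    and a: "\<And>k. 2 \<le> n \<Longrightarrow> k < n \<Longrightarrow>
      integrable M (\<lambda>x. \<bar>a k x\<bar> powr (q * (real n - 1))) \<and> Lnorm M (q * (real n - 1)) (a k) \<le> \<beta>"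
    and b: "\<And>k. 2 \<le> n \<Longrightarrow> k < n \<Longrightarrow>
      integrable M (\<lambda>x. \<bar>b k x\<bar> powr (q * (real n - 1))) \<and> Lnorm M (q * (real n - 1)) (b k) \<le> \<beta>"
  defines "F \<equiv> \<lambda>k. if k < l then a k else b k"
  shows "integrable M (\<lambda>x. \<bar>\<Prod>k\<in>{..<n} - {l}. F k x\<bar> powr q)"
    and "Lnorm M q (\<lambda>x. \<Prod>k\<in>{..<n} - {l}. F k x) \<le> \<beta> ^ (n - 1)"
proof -
  have card: "card ({..<n} - {l}) = n - 1" "real (n - 1) = real n - 1"
    using l by auto
  have "F k \<in> borel_measurable M" for k
    using ab_meas by (simp add: F_def)
  moreover have "integrable M (\<lambda>x. \<bar>F k x\<bar> powr (q * card ({..<n} - {l})))"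
    and "Lnorm M (q * card ({..<n} - {l})) (F k) \<le> \<beta>" if "k \<in> {..<n} - {l}" for k
    using that l a b by (cases "k < l"; simp add: card F_def)+
  ultimately show "integrable M (\<lambda>x. \<bar>\<Prod>k\<in>{..<n} - {l}. F k x\<bar> powr q)"
    and "Lnorm M q (\<lambda>x. \<Prod>k\<in>{..<n} - {l}. F k x) \<le> \<beta> ^ (n - 1)"
    using integrable_abs_prod_powr[of "{..<n} - {l}" F q] Lnorm_prod_le[OF _ q \<beta>, of "{..<n} - {l}" F]
    by (auto simp: card)
qed

lemma (in prob_space) integral_prod_diff_le:
  fixes a b :: "nat \<Rightarrow> 'a \<Rightarrow> real" and p q \<beta> :: real
  assumes pq: "1 < p" "1 / p + 1 / q = 1" and \<beta>: "0 \<le> \<beta>"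
    and ab_meas[measurable]: "\<And>l. a l \<in> borel_measurable M" "\<And>l. b l \<in> borel_measurable M"
    and diff: "\<And>l. l < n \<Longrightarrow> integrable M (\<lambda>x. \<bar>a l x - b l x\<bar> powr p)"
    and a: "\<And>k. 2 \<le> n \<Longrightarrow> k < n \<Longrightarrow>
      integrable M (\<lambda>x. \<bar>a k x\<bar> powr (q * (real n - 1))) \<and> Lnorm M (q * (real n - 1)) (a k) \<le> \<beta>"
    and b: "\<And>k. 2 \<le> n \<Longrightarrow> k < n \<Longrightarrow>
      integrable M (\<lambda>x. \<bar>b k x\<bar> powr (q * (real n - 1))) \<and> Lnorm M (q * (real n - 1)) (b k) \<le> \<beta>"
  shows "integrable M (\<lambda>x. (\<Prod>l<n. a l x) - (\<Prod>l<n. b l x))"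
    and "\<bar>\<integral>x. (\<Prod>l<n. a l x) - (\<Prod>l<n. b l x) \<partial>M\<bar> \<le> \<beta> ^ (n - 1) * (\<Sum>l<n. Lnorm M p (\<lambda>x. a l x - b l x))"
proof -
  have q: "0 < q" using conjugate_exponent_gt_1[OF pq] by simp
  define P where "P l x = (\<Prod>k\<in>{..<n} - {l}. (if k < l then a k else b k) x)" for l x
  have P: "integrable M (\<lambda>x. \<bar>P l x\<bar> powr q)" "Lnorm M q (P l) \<le> \<beta> ^ (n - 1)" if "l < n" for l
    unfolding P_def using Lnorm_prod_mixed_le[OF that q \<beta> ab_meas a b] by auto
  have T: "integrable M (\<lambda>x. (a l x - b l x) * P l x)"
    "(\<integral>x. \<bar>(a l x - b l x) * P l x\<bar> \<partial>M) \<le> Lnorm M p (\<lambda>x. a l x - b l x) * \<beta> ^ (n - 1)"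
    if l: "l < n" for l
  proof -
    have [measurable]: "P l \<in> borel_measurable M"
      unfolding P_def using ab_meas by (intro borel_measurable_prod) simp
    show "integrable M (\<lambda>x. (a l x - b l x) * P l x)"
      using Holder_inequality(1)[OF pq, of "\<lambda>x. a l x - b l x"] diff[OF l] P[OF l] by auto
    have "(\<integral>x. \<bar>(a l x - b l x) * P l x\<bar> \<partial>M) \<le> Lnorm M p (\<lambda>x. a l x - b l x) * Lnorm M q (P l)"
      using Holder_inequality(2)[OF pq, of "\<lambda>x. a l x - b l x"] diff[OF l] P[OF l] by auto
    also have "\<dots> \<le> Lnorm M p (\<lambda>x. a l x - b l x) * \<beta> ^ (n - 1)"
      using P[OF l] by (intro mult_left_mono Lnorm_nonneg) auto
    finally show "(\<integral>x. \<bar>(a l x - b l x) * P l x\<bar> \<partial>M) \<le> Lnorm M p (\<lambda>x. a l x - b l x) * \<beta> ^ (n - 1)" .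
  qed
  have telescope: "(\<Prod>l<n. a l x) - (\<Prod>l<n. b l x) = (\<Sum>l<n. (a l x - b l x) * P l x)" for x
    unfolding P_def using prod_lessThan_diff_telescope[of "\<lambda>l. a l x" n "\<lambda>l. b l x"]
    by (simp add: if_distrib[of "\<lambda>f. f x"])
  show "integrable M (\<lambda>x. (\<Prod>l<n. a l x) - (\<Prod>l<n. b l x))"
    unfolding telescope using T by auto
  have "\<bar>\<integral>x. (\<Prod>l<n. a l x) - (\<Prod>l<n. b l x) \<partial>M\<bar> = \<bar>\<Sum>l<n. \<integral>x. (a l x - b l x) * P l x \<partial>M\<bar>"
    unfolding telescope using T by (simp add: Bochner_Integration.integral_sum)
  also have "\<dots> \<le> (\<Sum>l<n. \<integral>x. \<bar>(a l x - b l x) * P l x\<bar> \<partial>M)"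
    using T by (intro order_trans[OF sum_abs] sum_mono integral_abs_bound)
  also have "\<dots> \<le> (\<Sum>l<n. Lnorm M p (\<lambda>x. a l x - b l x) * \<beta> ^ (n - 1))"
    using T by (intro sum_mono) auto
  finally show "\<bar>\<integral>x. (\<Prod>l<n. a l x) - (\<Prod>l<n. b l x) \<partial>M\<bar> \<le> \<beta> ^ (n - 1) * (\<Sum>l<n. Lnorm M p (\<lambda>x. a l x - b l x))"
    by (simp add: sum_distrib_left mult.commute)
qed

section \<open>Couplings and the transport cost\<close>

lemma measurable_vec_nth [measurable]: "(\<lambda>x::real^'n. x $ i) \<in> borel_measurable borel"
  by (intro borel_measurable_continuous_onI continuous_intros)

lemma borel_prob_measurable:
  assumes "borel_prob \<mu>" "f \<in> borel_measurable borel"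
  shows "f \<in> borel_measurable \<mu>"
  using assms measurable_cong_sets[of \<mu> borel] by (auto simp: borel_prob_def)

lemma borel_prob_integrable_coord_powr:
  fixes \<mu> :: "(real^'n::finite) measure"
  assumes "borel_prob \<mu>" "integrable \<mu> (\<lambda>x. \<bar>x $ i\<bar> powr t)" "0 \<le> s" "s \<le> t"
  shows "integrable \<mu> (\<lambda>x. \<bar>x $ i\<bar> powr s)"
  using assms prob_space.integrable_abs_powr_mono[of \<mu> "\<lambda>x. x $ i"]
  by (auto simp: borel_prob_def borel_prob_measurable[OF assms(1)])

lemma measurable_monomial [measurable]: "monomial L \<in> borel_measurable borel"
  unfolding monomial_def by measurable

lemma integrable_monomial:
  fixes \<mu> :: "(real^'n::finite) measure"
  assumes "borel_prob \<mu>" "\<And>i. integrable \<mu> (\<lambda>x. \<bar>x $ i\<bar> powr length L)"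
  shows "integrable \<mu> (monomial L)"
proof -
  have "integrable \<mu> (\<lambda>x. \<bar>\<Prod>l<length L. x $ (L ! l)\<bar> powr 1)"
    using assms borel_prob_measurable[OF assms(1)]
    by (intro prob_space.integrable_abs_prod_powr) (auto simp: borel_prob_def)
  then show ?thesis
    using borel_prob_measurable[OF assms(1) measurable_monomial]
    by (simp flip: integrable_abs_iff add: monomial_def)
qed

lemma coupling_measurable:
  assumes "coupling \<gamma> \<mu>1 \<mu>2"
  shows "fst \<in> measurable \<gamma> borel" "snd \<in> measurable \<gamma> borel"
  using assms measurable_cong_sets[of \<gamma> "borel \<Otimes>\<^sub>M borel"]
  by (auto simp: coupling_def)

lemma coupling_integral_fst:
  fixes h :: "real^'n::finite \<Rightarrow> real"
  assumes "coupling \<gamma> \<mu>1 \<mu>2" "h \<in> borel_measurable borel"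
  shows "integrable \<gamma> (\<lambda>z. h (fst z)) \<longleftrightarrow> integrable \<mu>1 h"
    and "(\<integral>z. h (fst z) \<partial>\<gamma>) = (\<integral>x. h x \<partial>\<mu>1)"
  using assms integrable_distr_eq[OF coupling_measurable(1)[OF assms(1)] assms(2)]
    integral_distr[OF coupling_measurable(1)[OF assms(1)] assms(2)]
  by (auto simp: coupling_def)

lemma coupling_integral_snd:
  fixes h :: "real^'n::finite \<Rightarrow> real"
  assumes "coupling \<gamma> \<mu>1 \<mu>2" "h \<in> borel_measurable borel"
  shows "integrable \<gamma> (\<lambda>z. h (snd z)) \<longleftrightarrow> integrable \<mu>2 h"
    and "(\<integral>z. h (snd z) \<partial>\<gamma>) = (\<integral>x. h x \<partial>\<mu>2)"
  using assms integrable_distr_eq[OF coupling_measurable(2)[OF assms(1)] assms(2)]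
    integral_distr[OF coupling_measurable(2)[OF assms(1)] assms(2)]
  by (auto simp: coupling_def)

lemma coupling_prob_space:
  assumes "coupling \<gamma> \<mu>1 \<mu>2" "borel_prob \<mu>1"
  shows "prob_space \<gamma>"
proof (rule prob_spaceI)
  have "emeasure (distr \<gamma> borel fst) UNIV = 1"
    using assms prob_space.emeasure_space_1[of \<mu>1] by (auto simp: coupling_def borel_prob_def)
  then show "emeasure \<gamma> (space \<gamma>) = 1"
    using coupling_measurable(1)[OF assms(1)] by (simp add: emeasure_distr measurable_space vimage_def)
qed

lemma coupling_pair_measure:
  assumes "borel_prob \<mu>1" "borel_prob \<mu>2"
  shows "coupling (\<mu>1 \<Otimes>\<^sub>M \<mu>2) \<mu>1 \<mu>2"
proof -
  interpret \<mu>1: prob_space \<mu>1 using assms(1) by (simp add: borel_prob_def)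
  interpret \<mu>2: prob_space \<mu>2 using assms(2) by (simp add: borel_prob_def)
  have sets: "sets \<mu>1 = sets borel" "sets \<mu>2 = sets borel"
    using assms by (simp_all add: borel_prob_def)
  have "distr (\<mu>1 \<Otimes>\<^sub>M \<mu>2) borel fst = distr (\<mu>1 \<Otimes>\<^sub>M \<mu>2) \<mu>1 fst"
    using sets by (intro distr_cong) auto
  also have "\<dots> = \<mu>1" by (rule \<mu>2.distr_pair_fst)
  finally have fst: "distr (\<mu>1 \<Otimes>\<^sub>M \<mu>2) borel fst = \<mu>1" .
  have snd: "distr (\<mu>1 \<Otimes>\<^sub>M \<mu>2) borel snd = \<mu>2"
  proof (rule measure_eqI)
    fix A assume "A \<in> sets (distr (\<mu>1 \<Otimes>\<^sub>M \<mu>2) borel snd)"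
    then have A: "A \<in> sets \<mu>2" using sets by simp
    have "snd \<in> measurable (\<mu>1 \<Otimes>\<^sub>M \<mu>2) borel"
      using measurable_snd measurable_cong_sets[OF refl sets(2)] by blast
    then have "emeasure (distr (\<mu>1 \<Otimes>\<^sub>M \<mu>2) borel snd) A = emeasure (\<mu>1 \<Otimes>\<^sub>M \<mu>2) (snd -` A \<inter> space (\<mu>1 \<Otimes>\<^sub>M \<mu>2))"
      using A sets by (intro emeasure_distr) auto
    also have "snd -` A \<inter> space (\<mu>1 \<Otimes>\<^sub>M \<mu>2) = space \<mu>1 \<times> A"
      using sets.sets_into_space[OF A] by (auto simp: space_pair_measure)
    finally show "emeasure (distr (\<mu>1 \<Otimes>\<^sub>M \<mu>2) borel snd) A = emeasure \<mu>2 A"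
      using A by (simp add: \<mu>2.emeasure_pair_measure_Times \<mu>1.emeasure_space_1)
  qed (use sets in simp)
  show ?thesis
    unfolding coupling_def using fst snd sets_pair_measure_cong[OF sets] by simp
qed

lemma coupling_integrable_coord_diff_powr:
  fixes \<mu>1 \<mu>2 :: "(real^'n::finite) measure"
  assumes "coupling \<gamma> \<mu>1 \<mu>2" "0 \<le> p"
    and "integrable \<mu>1 (\<lambda>x. \<bar>x $ i\<bar> powr p)" "integrable \<mu>2 (\<lambda>x. \<bar>x $ i\<bar> powr p)"
  shows "integrable \<gamma> (\<lambda>z. \<bar>fst z $ i - snd z $ i\<bar> powr p)"
proof (rule integrable_abs_diff_powr)
  note [measurable] = coupling_measurable[OF assms(1)]
  show "(\<lambda>z. fst z $ i) \<in> borel_measurable \<gamma>" "(\<lambda>z. snd z $ i) \<in> borel_measurable \<gamma>"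
    by measurable
  have h: "(\<lambda>x::real^'n. \<bar>x $ i\<bar> powr p) \<in> borel_measurable borel"
    by measurable
  show "integrable \<gamma> (\<lambda>z. \<bar>fst z $ i\<bar> powr p)" "integrable \<gamma> (\<lambda>z. \<bar>snd z $ i\<bar> powr p)"
    using assms coupling_integral_fst(1)[OF assms(1) h] coupling_integral_snd(1)[OF assms(1) h] by auto
qed fact

lemma coupling_Lnorm_coord:
  fixes \<mu>1 \<mu>2 :: "(real^'n::finite) measure"
  assumes "coupling \<gamma> \<mu>1 \<mu>2"
  shows "Lnorm \<gamma> r (\<lambda>z. fst z $ i) = coord_norm \<mu>1 r i"
    and "Lnorm \<gamma> r (\<lambda>z. snd z $ i) = coord_norm \<mu>2 r i"
proof -
  have h: "(\<lambda>x::real^'n. \<bar>x $ i\<bar> powr r) \<in> borel_measurable borel"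
    by measurable
  show "Lnorm \<gamma> r (\<lambda>z. fst z $ i) = coord_norm \<mu>1 r i" "Lnorm \<gamma> r (\<lambda>z. snd z $ i) = coord_norm \<mu>2 r i"
    using coupling_integral_fst(2)[OF assms h] coupling_integral_snd(2)[OF assms h]
    by (simp_all add: Lnorm_def coord_norm_def)
qed

definition wp_integrand :: "real \<Rightarrow> (real^'n::finite) \<times> (real^'n) \<Rightarrow> real" where
  "wp_integrand p z = (1 / real CARD('n)) * (\<Sum>i\<in>UNIV. \<bar>fst z $ i - snd z $ i\<bar> powr p)"

lemma wp_integrand_nonneg: "0 \<le> wp_integrand p z"
  by (simp add: wp_integrand_def sum_nonneg)

lemma integrable_wp_integrand:
  fixes \<mu>1 \<mu>2 :: "(real^'n::finite) measure"
  assumes "coupling \<gamma> \<mu>1 \<mu>2" "0 \<le> p"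
    and "\<And>i. integrable \<mu>1 (\<lambda>x. \<bar>x $ i\<bar> powr p)" "\<And>i. integrable \<mu>2 (\<lambda>x. \<bar>x $ i\<bar> powr p)"
  shows "integrable \<gamma> (wp_integrand p)"
  unfolding wp_integrand_def using assms coupling_integrable_coord_diff_powr[OF assms(1,2)]
  by (intro integrable_mult_right Bochner_Integration.integrable_sum) auto

lemma wp_dist_nonneg: "0 \<le> wp_dist p \<mu>1 \<mu>2"
  by (simp add: wp_dist_def)

lemma le_wp_dist:
  fixes \<mu>1 \<mu>2 :: "(real^'n::finite) measure" and D K p :: real
  assumes p: "0 < p" and K: "0 \<le> K" and \<gamma>0: "coupling \<gamma>0 \<mu>1 \<mu>2"
    and int: "\<And>\<gamma>. coupling \<gamma> \<mu>1 \<mu>2 \<Longrightarrow> integrable \<gamma> (wp_integrand p)"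
    and le: "\<And>\<gamma>. coupling \<gamma> \<mu>1 \<mu>2 \<Longrightarrow> D \<le> K * (\<integral>z. wp_integrand p z \<partial>\<gamma>) powr (1 / p)"
  shows "D \<le> K * wp_dist p \<mu>1 \<mu>2"
proof (cases "D \<le> 0")
  case True
  moreover have "0 \<le> K * wp_dist p \<mu>1 \<mu>2"
    using K by (simp add: wp_dist_def)
  ultimately show ?thesis by linarith
next
  case False
  then have K: "0 < K" using le[OF \<gamma>0] K by (cases "K = 0") auto
  have cost: "(D / K) powr p \<le> (\<integral>z. wp_integrand p z \<partial>\<gamma>)" if \<gamma>: "coupling \<gamma> \<mu>1 \<mu>2" for \<gamma>
  proof -
    have "D / K \<le> (\<integral>z. wp_integrand p z \<partial>\<gamma>) powr (1 / p)"
      using le[OF \<gamma>] K by (simp add: divide_le_eq mult.commute)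
    then have "(D / K) powr p \<le> ((\<integral>z. wp_integrand p z \<partial>\<gamma>) powr (1 / p)) powr p"
      using p False K by (intro powr_mono2) auto
    then show ?thesis
      using p by (simp add: powr_powr wp_integrand_nonneg)
  qed
  have nn_integral: "(\<integral>\<^sup>+z. ennreal (wp_integrand p z) \<partial>\<gamma>) = ennreal (\<integral>z. wp_integrand p z \<partial>\<gamma>)"
    if "coupling \<gamma> \<mu>1 \<mu>2" for \<gamma>
    using int[OF that] by (intro nn_integral_eq_integral) (auto simp: wp_integrand_nonneg)
  have wp_cost: "wp_cost p \<mu>1 \<mu>2 = (INF \<gamma> \<in> {\<gamma>. coupling \<gamma> \<mu>1 \<mu>2}. ennreal (\<integral>z. wp_integrand p z \<partial>\<gamma>))"
    unfolding wp_cost_def wp_integrand_def[symmetric] using nn_integral by (intro INF_cong) auto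
  have "ennreal ((D / K) powr p) \<le> wp_cost p \<mu>1 \<mu>2"
    unfolding wp_cost using cost by (intro INF_greatest ennreal_leI) auto
  \<comment> \<open>\<open>wp_dist\<close> is \<open>enn2real\<close> of the cost, which would be \<open>0\<close> for an infinite cost; \<open>\<gamma>0\<close> excludes this\<close>
  moreover have "wp_cost p \<mu>1 \<mu>2 \<le> ennreal (\<integral>z. wp_integrand p z \<partial>\<gamma>0)"
    unfolding wp_cost using \<gamma>0 by (intro INF_lower) auto
  ultimately have "enn2real (ennreal ((D / K) powr p)) \<le> enn2real (wp_cost p \<mu>1 \<mu>2)"
    by (intro enn2real_mono) (auto simp: top.not_eq_extremum intro: le_less_trans)
  then have "(D / K) powr p \<le> enn2real (wp_cost p \<mu>1 \<mu>2)"
    by simp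
  then have "((D / K) powr p) powr (1 / p) \<le> wp_dist p \<mu>1 \<mu>2"
    unfolding wp_dist_def using p by (intro powr_mono2) auto
  then show ?thesis
    using p K False by (simp add: powr_powr divide_le_eq mult.commute)
qed

section \<open>Permutation invariance\<close>

lemma sum_permutes_apply:
  fixes g :: "'n::finite \<Rightarrow> real"
  shows "(\<Sum>\<sigma> | \<sigma> permutes (UNIV :: 'n set). g (\<sigma> j)) = fact CARD('n) * (\<Sum>i\<in>UNIV. g i) / CARD('n)"
proof -
  let ?P = "{\<sigma>. \<sigma> permutes (UNIV :: 'n set)}"
  \<comment> \<open>composing with a transposition shows that the sum does not depend on \<open>j\<close>\<close>
  have shift: "(\<Sum>\<sigma>\<in>?P. g (\<sigma> j')) = (\<Sum>\<sigma>\<in>?P. g (\<sigma> j))" for j'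
    by (rule sum.reindex_bij_witness[where i="\<lambda>\<sigma>. \<sigma> \<circ> Transposition.transpose j j'"
          and j="\<lambda>\<sigma>. \<sigma> \<circ> Transposition.transpose j j'"])
       (auto simp: comp_assoc intro!: permutes_compose permutes_swap_id)
  have "(\<Sum>j'\<in>UNIV. \<Sum>\<sigma>\<in>?P. g (\<sigma> j')) = (\<Sum>j'\<in>(UNIV :: 'n set). \<Sum>\<sigma>\<in>?P. g (\<sigma> j))"
    by (rule sum.cong[OF refl shift])
  then have "CARD('n) * (\<Sum>\<sigma>\<in>?P. g (\<sigma> j)) = (\<Sum>j'\<in>UNIV. \<Sum>\<sigma>\<in>?P. g (\<sigma> j'))"
    by simp
  also have "\<dots> = (\<Sum>\<sigma>\<in>?P. \<Sum>j'\<in>UNIV. g (\<sigma> j'))"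
    by (rule sum.swap)
  also have "\<dots> = (\<Sum>\<sigma>\<in>?P. \<Sum>i\<in>UNIV. g i)"
  proof (rule sum.cong[OF refl])
    fix \<sigma> assume "\<sigma> \<in> ?P"
    then show "(\<Sum>j'\<in>UNIV. g (\<sigma> j')) = (\<Sum>i\<in>UNIV. g i)"
      using sum.permute[of \<sigma> UNIV g] by (simp add: comp_def)
  qed
  also have "\<dots> = fact CARD('n) * (\<Sum>i\<in>UNIV. g i)"
    by (simp add: card_permutations)
  finally show ?thesis
    by (simp add: field_simps)
qed

lemma Qperm_inv_nth:
  assumes "\<sigma> permutes (UNIV :: 'n set)"
  shows "Qperm (inv \<sigma>) x $ j = (x :: real^'n::finite) $ \<sigma> j"
  using assms by (simp add: Qperm_def inv_inv_eq permutes_bij)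

lemma perm_invariant_integral_Qperm_inv:
  fixes \<mu> :: "(real^'n::finite) measure" and f :: "real^'n \<Rightarrow> real"
  assumes "perm_invariant \<mu>" "\<sigma> permutes UNIV" "integrable \<mu> f"
  shows "(\<integral>x. f (Qperm (inv \<sigma>) x) \<partial>\<mu>) = (\<integral>x. f x \<partial>\<mu>)"
proof -
  have "inv \<sigma> permutes UNIV"
    using assms(2) by (rule permutes_inv)
  then have "integral\<^sup>L \<mu> (f \<circ> Qperm (inv \<sigma>)) = integral\<^sup>L \<mu> f"
    using assms(1,3) unfolding perm_invariant_def by blast
  then show ?thesis
    by (simp add: comp_def)
qed

lemma perm_invariant_integral_monomial_map:
  fixes \<mu> :: "(real^'n::finite) measure"
  assumes "perm_invariant \<mu>" "\<sigma> permutes UNIV" "integrable \<mu> (monomial J)"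
  shows "(\<integral>x. monomial (map \<sigma> J) x \<partial>\<mu>) = (\<integral>x. monomial J x \<partial>\<mu>)"
  using perm_invariant_integral_Qperm_inv[OF assms] assms(2)
  by (simp add: monomial_def Qperm_inv_nth)

lemma perm_invariant_coord_norm:
  fixes \<mu> :: "(real^'n::finite) measure"
  assumes "perm_invariant \<mu>" "\<sigma> permutes UNIV" "integrable \<mu> (\<lambda>x. \<bar>x $ j\<bar> powr r)"
  shows "coord_norm \<mu> r (\<sigma> j) = coord_norm \<mu> r j"
  using perm_invariant_integral_Qperm_inv[OF assms] assms(2)
  by (simp add: coord_norm_def Qperm_inv_nth)

section \<open>Moments of monomials\<close>

lemma monomial_integral_diff_le_coupling:
  fixes \<mu>1 \<mu>2 :: "(real^'n::finite) measure" and L :: "'n list" and p \<beta> :: real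
  defines "r \<equiv> p / (p - 1) * (real (length L) - 1)"
  assumes p: "1 < p" and \<beta>: "0 \<le> \<beta>" and \<mu>1: "borel_prob \<mu>1" and \<gamma>: "coupling \<gamma> \<mu>1 \<mu>2"
    and monomial: "integrable \<mu>1 (monomial L)" "integrable \<mu>2 (monomial L)"
    and p_moment: "\<And>i. integrable \<mu>1 (\<lambda>x. \<bar>x $ i\<bar> powr p) \<and> integrable \<mu>2 (\<lambda>x. \<bar>x $ i\<bar> powr p)"
    and r_moment: "\<And>i. 2 \<le> length L \<Longrightarrow> i \<in> set L \<Longrightarrow>
      integrable \<mu>1 (\<lambda>x. \<bar>x $ i\<bar> powr r) \<and> integrable \<mu>2 (\<lambda>x. \<bar>x $ i\<bar> powr r) \<and>
      coord_norm \<mu>1 r i \<le> \<beta> \<and> coord_norm \<mu>2 r i \<le> \<beta>"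
  shows "\<bar>(\<integral>x. monomial L x \<partial>\<mu>1) - (\<integral>x. monomial L x \<partial>\<mu>2)\<bar>
    \<le> \<beta> ^ (length L - 1) * (\<Sum>l<length L. Lnorm \<gamma> p (\<lambda>z. fst z $ (L ! l) - snd z $ (L ! l)))"
proof -
  interpret \<gamma>: prob_space \<gamma>
    using coupling_prob_space[OF \<gamma> \<mu>1] .
  note [measurable] = coupling_measurable[OF \<gamma>]
  have pq: "1 / p + 1 / (p / (p - 1)) = 1"
    using p by (simp add: field_simps)
  have r_moment_\<gamma>: "integrable \<gamma> (\<lambda>z. \<bar>fst z $ i\<bar> powr r) \<and> Lnorm \<gamma> r (\<lambda>z. fst z $ i) \<le> \<beta> \<and>
      integrable \<gamma> (\<lambda>z. \<bar>snd z $ i\<bar> powr r) \<and> Lnorm \<gamma> r (\<lambda>z. snd z $ i) \<le> \<beta>"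
    if "2 \<le> length L" "i \<in> set L" for i
  proof -
    have h: "(\<lambda>x::real^'n. \<bar>x $ i\<bar> powr r) \<in> borel_measurable borel"
      by measurable
    show ?thesis
      using r_moment[OF that] coupling_integral_fst(1)[OF \<gamma> h] coupling_integral_snd(1)[OF \<gamma> h]
      by (simp add: coupling_Lnorm_coord[OF \<gamma>])
  qed
  have "(\<integral>x. monomial L x \<partial>\<mu>1) - (\<integral>x. monomial L x \<partial>\<mu>2)
      = (\<integral>z. (\<Prod>l<length L. fst z $ (L ! l)) - (\<Prod>l<length L. snd z $ (L ! l)) \<partial>\<gamma>)"
    using monomial coupling_integral_fst[OF \<gamma> measurable_monomial]
      coupling_integral_snd[OF \<gamma> measurable_monomial]
    by (simp add: monomial_def)
  also have "\<bar>\<dots>\<bar> \<le> \<beta> ^ (length L - 1) * (\<Sum>l<length L. Lnorm \<gamma> p (\<lambda>z. fst z $ (L ! l) - snd z $ (L ! l)))"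
  proof (rule \<gamma>.integral_prod_diff_le(2)[OF p pq \<beta>])
    show "(\<lambda>z. fst z $ (L ! l)) \<in> borel_measurable \<gamma>" for l
      by measurable
    show "(\<lambda>z. snd z $ (L ! l)) \<in> borel_measurable \<gamma>" for l
      by measurable
    show "integrable \<gamma> (\<lambda>z. \<bar>fst z $ (L ! l) - snd z $ (L ! l)\<bar> powr p)" for l
      using p p_moment by (intro coupling_integrable_coord_diff_powr[OF \<gamma>]) auto
  qed (use r_moment_\<gamma> in \<open>auto simp: r_def\<close>)
  finally show ?thesis .
qed

context
  fixes \<mu>1 \<mu>2 :: "(real^'n::finite) measure" and J :: "'n list" and p \<beta> r :: real
    and \<gamma> :: "((real^'n) \<times> (real^'n)) measure"
  defines "r \<equiv> p / (p - 1) * (real (length J) - 1)"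
  assumes p: "1 < p" and \<beta>: "0 \<le> \<beta>" and \<mu>1: "borel_prob \<mu>1" and \<mu>2: "borel_prob \<mu>2"
    and inv1: "perm_invariant \<mu>1" and inv2: "perm_invariant \<mu>2" and \<gamma>: "coupling \<gamma> \<mu>1 \<mu>2"
    and n_moment: "\<And>i. integrable \<mu>1 (\<lambda>x. \<bar>x $ i\<bar> powr length J) \<and> integrable \<mu>2 (\<lambda>x. \<bar>x $ i\<bar> powr length J)"
    and p_moment: "\<And>i. integrable \<mu>1 (\<lambda>x. \<bar>x $ i\<bar> powr p) \<and> integrable \<mu>2 (\<lambda>x. \<bar>x $ i\<bar> powr p)"
    and r_moment: "\<And>i. 2 \<le> length J \<Longrightarrow> integrable \<mu>1 (\<lambda>x. \<bar>x $ i\<bar> powr r) \<and> integrable \<mu>2 (\<lambda>x. \<bar>x $ i\<bar> powr r)"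
    and r_norm: "\<And>i. 2 \<le> length J \<Longrightarrow> i \<in> set J \<Longrightarrow> coord_norm \<mu>1 r i \<le> \<beta> \<and> coord_norm \<mu>2 r i \<le> \<beta>"
begin

lemma monomial_integral_diff_le_permuted:
  assumes \<sigma>: "\<sigma> permutes UNIV"
  shows "\<bar>(\<integral>x. monomial J x \<partial>\<mu>1) - (\<integral>x. monomial J x \<partial>\<mu>2)\<bar>
    \<le> \<beta> ^ (length J - 1) * (\<Sum>l<length J. Lnorm \<gamma> p (\<lambda>z. fst z $ \<sigma> (J ! l) - snd z $ \<sigma> (J ! l)))"
proof -
  have monomial: "integrable \<mu>1 (monomial L)" "integrable \<mu>2 (monomial L)" if "length L = length J" for L
    using integrable_monomial[OF \<mu>1] integrable_monomial[OF \<mu>2] n_moment that by auto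
  have "\<bar>(\<integral>x. monomial J x \<partial>\<mu>1) - (\<integral>x. monomial J x \<partial>\<mu>2)\<bar>
      = \<bar>(\<integral>x. monomial (map \<sigma> J) x \<partial>\<mu>1) - (\<integral>x. monomial (map \<sigma> J) x \<partial>\<mu>2)\<bar>"
    using monomial[OF refl] \<sigma> inv1 inv2 by (simp add: perm_invariant_integral_monomial_map)
  also have "\<dots> \<le> \<beta> ^ (length (map \<sigma> J) - 1) *
      (\<Sum>l<length (map \<sigma> J). Lnorm \<gamma> p (\<lambda>z. fst z $ (map \<sigma> J ! l) - snd z $ (map \<sigma> J ! l)))"
  proof (rule monomial_integral_diff_le_coupling[OF p \<beta> \<mu>1 \<gamma> monomial])
    fix i assume n2: "2 \<le> length (map \<sigma> J)" and "i \<in> set (map \<sigma> J)"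
    then obtain j where "j \<in> set J" "i = \<sigma> j" by auto
    then show "integrable \<mu>1 (\<lambda>x. \<bar>x $ i\<bar> powr (p / (p - 1) * (real (length (map \<sigma> J)) - 1))) \<and>
        integrable \<mu>2 (\<lambda>x. \<bar>x $ i\<bar> powr (p / (p - 1) * (real (length (map \<sigma> J)) - 1))) \<and>
        coord_norm \<mu>1 (p / (p - 1) * (real (length (map \<sigma> J)) - 1)) i \<le> \<beta> \<and>
        coord_norm \<mu>2 (p / (p - 1) * (real (length (map \<sigma> J)) - 1)) i \<le> \<beta>"
      using n2 r_norm r_moment perm_invariant_coord_norm[OF inv1 \<sigma>] perm_invariant_coord_norm[OF inv2 \<sigma>]
      by (simp add: r_def)
  qed (use p_moment in auto)
  finally show ?thesis
    by simp
qed

lemma monomial_integral_diff_le_wp_integrand: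
  "\<bar>(\<integral>x. monomial J x \<partial>\<mu>1) - (\<integral>x. monomial J x \<partial>\<mu>2)\<bar>
    \<le> length J * \<beta> ^ (length J - 1) * (\<integral>z. wp_integrand p z \<partial>\<gamma>) powr (1 / p)"
proof -
  let ?D = "\<bar>(\<integral>x. monomial J x \<partial>\<mu>1) - (\<integral>x. monomial J x \<partial>\<mu>2)\<bar>"
    and ?P = "{\<sigma>. \<sigma> permutes (UNIV :: 'n set)}" and ?N = "real CARD('n)" and ?n = "length J"
  define A where "A i = Lnorm \<gamma> p (\<lambda>z. fst z $ i - snd z $ i)" for i
  have "fact CARD('n) * ?D = (\<Sum>\<sigma>\<in>?P. ?D)"
    by (simp add: card_permutations)
  also have "\<dots> \<le> (\<Sum>\<sigma>\<in>?P. \<beta> ^ (?n - 1) * (\<Sum>l<?n. A (\<sigma> (J ! l))))"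
    unfolding A_def using monomial_integral_diff_le_permuted by (intro sum_mono) auto
  also have "\<dots> = \<beta> ^ (?n - 1) * (\<Sum>l<?n. \<Sum>\<sigma>\<in>?P. A (\<sigma> (J ! l)))"
    by (simp add: sum_distrib_left sum.swap[of _ ?P])
  also have "\<dots> = fact CARD('n) * (?n * \<beta> ^ (?n - 1) * ((\<Sum>i\<in>UNIV. A i) / ?N))"
    by (simp add: sum_permutes_apply)
  finally have "?D \<le> ?n * \<beta> ^ (?n - 1) * ((\<Sum>i\<in>UNIV. A i) / ?N)"
    by (rule mult_left_le_imp_le) simp
  also have "\<dots> \<le> ?n * \<beta> ^ (?n - 1) * ((\<Sum>i\<in>UNIV. A i powr p) / ?N) powr (1 / p)"
    using mean_le_power_mean[OF finite UNIV_not_empty p, of A] \<beta>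
    by (intro mult_left_mono) (auto simp: A_def Lnorm_nonneg)
  also have "(\<Sum>i\<in>UNIV. A i powr p) / ?N = (\<integral>z. wp_integrand p z \<partial>\<gamma>)"
    using p p_moment coupling_integrable_coord_diff_powr[OF \<gamma>]
    by (simp add: A_def Lnorm_powr wp_integrand_def)
  finally show ?thesis .
qed

end

lemma coord_norm_le_Mconst:
  assumes "2 \<le> length J" "i \<in> set J"
  shows "coord_norm \<mu>1 (p / (p - 1) * (real (length J) - 1)) i \<le> Mconst \<mu>1 \<mu>2 J p"
    and "coord_norm \<mu>2 (p / (p - 1) * (real (length J) - 1)) i \<le> Mconst \<mu>1 \<mu>2 J p"
  using assms Max_ge[of "(\<lambda>i. max (coord_norm \<mu>1 (p / (p - 1) * (real (length J) - 1)) i)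
      (coord_norm \<mu>2 (p / (p - 1) * (real (length J) - 1)) i)) ` set J"]
  by (fastforce simp: Mconst_def Let_def)+

lemma Mconst_nonneg:
  assumes "J \<noteq> []"
  shows "0 \<le> Mconst \<mu>1 \<mu>2 J p"
proof (cases "length J = 1")
  case False
  moreover have "0 < length J" using assms by simp
  ultimately have "2 \<le> length J" by linarith
  show ?thesis
    by (rule order_trans[OF _ coord_norm_le_Mconst(1)[of J "hd J"]])
       (use \<open>2 \<le> length J\<close> assms in \<open>auto simp: coord_norm_def\<close>)
qed (simp add: Mconst_def)

lemma moment_exponents_le:
  fixes p p0 n :: real
  assumes "1 < p" "p \<le> p0" "n \<le> p0 + 1 - p0 / p"
  shows "n \<le> p0" and "p / (p - 1) * (n - 1) \<le> p0"
proof -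
  have "1 \<le> p0 / p" using assms by simp
  then show "n \<le> p0" using assms by linarith
  have "n - 1 \<le> p0 * (p - 1) / p" using assms by (simp add: field_simps)
  then have "p / (p - 1) * (n - 1) \<le> p / (p - 1) * (p0 * (p - 1) / p)"
    using assms by (intro mult_left_mono) auto
  then show "p / (p - 1) * (n - 1) \<le> p0" using assms by simp
qed

lemma le_mult_div_one_minus_powr:
  fixes a b k N p :: real
  assumes "0 \<le> a" "0 \<le> b" "1 \<le> k" "k < N" "0 < p"
  shows "a * b \<le> a * (k / (1 - k / N)) powr (1 / p) * b"
proof -
  have "0 < 1 - k / N" "1 - k / N \<le> 1" using assms by auto
  then have "k \<le> k / (1 - k / N)" using assms by (simp add: le_divide_eq)
  then have "1 \<le> (k / (1 - k / N)) powr (1 / p)"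
    using assms by (intro ge_one_powr_ge_zero) (linarith, simp)
  then show ?thesis
    using assms mult_left_mono[of 1 "(k / (1 - k / N)) powr (1 / p)" "a * b"] by (simp add: ac_simps)
qed

theorem theorem2p4:
  fixes p p0 :: real and \<mu>1 \<mu>2 :: "(real^'n::finite) measure" and J :: "'n list"
  assumes "p > 1" and "p0 \<ge> p"
    and "borel_prob \<mu>1" and "borel_prob \<mu>2"
    and "perm_invariant \<mu>1" and "perm_invariant \<mu>2"
    and "\<And>i. integrable \<mu>1 (\<lambda>x. \<bar>x $ i\<bar> powr p0)"
    and "\<And>i. integrable \<mu>2 (\<lambda>x. \<bar>x $ i\<bar> powr p0)"
    and "real (length J) \<le> p0 + 1 - p0 / p"
  shows "(length J \<ge> 2 \<longrightarrow> (\<forall>i \<in> set J.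
             integrable \<mu>1 (\<lambda>x. \<bar>x $ i\<bar> powr ((p / (p - 1)) * (real (length J) - 1))) \<and>
             integrable \<mu>2 (\<lambda>x. \<bar>x $ i\<bar> powr ((p / (p - 1)) * (real (length J) - 1)))))
      \<and> (card (set J) < CARD('n) \<longrightarrow>
           \<bar>(\<integral>x. monomial J x \<partial>\<mu>1) - (\<integral>x. monomial J x \<partial>\<mu>2)\<bar>
           \<le> real (length J) * Mconst \<mu>1 \<mu>2 J p ^ (length J - 1)
              * (real (card (set J)) / (1 - real (card (set J)) / real CARD('n))) powr (1 / p)
              * wp_dist p \<mu>1 \<mu>2)"
proof -
  note p = assms(1) and \<mu>1 = assms(3) and \<mu>2 = assms(4)
  let ?D = "\<bar>(\<integral>x. monomial J x \<partial>\<mu>1) - (\<integral>x. monomial J x \<partial>\<mu>2)\<bar>"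
    and ?K = "length J * Mconst \<mu>1 \<mu>2 J p ^ (length J - 1) * wp_dist p \<mu>1 \<mu>2"
    and ?r = "p / (p - 1) * (real (length J) - 1)"
  have moment: "integrable \<mu>1 (\<lambda>x. \<bar>x $ i\<bar> powr s) \<and> integrable \<mu>2 (\<lambda>x. \<bar>x $ i\<bar> powr s)"
    if "0 \<le> s" "s \<le> p0" for i s
    using borel_prob_integrable_coord_powr[OF \<mu>1 assms(7) that] borel_prob_integrable_coord_powr[OF \<mu>2 assms(8) that] ..
  note exponents = moment_exponents_le[OF p assms(2,9)]
  have r_moment: "2 \<le> length J \<Longrightarrow> integrable \<mu>1 (\<lambda>x. \<bar>x $ i\<bar> powr ?r) \<and> integrable \<mu>2 (\<lambda>x. \<bar>x $ i\<bar> powr ?r)" for i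
    using moment exponents p by simp
  have "?D \<le> ?K" if "J \<noteq> []"
    using p assms(2) moment exponents r_moment Mconst_nonneg[OF that] coord_norm_le_Mconst
    by (intro le_wp_dist[OF _ _ coupling_pair_measure[OF \<mu>1 \<mu>2]] integrable_wp_integrand
        monomial_integral_diff_le_wp_integrand[OF p _ \<mu>1 \<mu>2 assms(5,6)]) auto
  moreover have "?K \<le> length J * Mconst \<mu>1 \<mu>2 J p ^ (length J - 1)
      * (real (card (set J)) / (1 - real (card (set J)) / real CARD('n))) powr (1 / p) * wp_dist p \<mu>1 \<mu>2"
    if "J \<noteq> []" "card (set J) < CARD('n)"
    using that p Mconst_nonneg[OF that(1)] wp_dist_nonneg
    by (intro le_mult_div_one_minus_powr) (auto simp: Suc_le_eq card_gt_0_iff)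
  moreover have "?D = 0" if "J = []"
    using that \<mu>1 \<mu>2 by (simp add: monomial_def borel_prob_def prob_space.prob_space)
  ultimately show ?thesis
    using r_moment by (cases "J = []") (auto intro: order_trans)
qed

end
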